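(* Fix data $(x_i,y_i,z_i)_{i=1}^n$, $\lambda,\nu>0$, $m\in\mathbb N$ and feature maps $\phi_{x,m},\phi_{z,m}$; let $\Phi_f,\Phi_g,\mathcal L_{rf},\mathcal L_i$ be as in the context, with $\theta_0\sim\mathcal N(0,I)$, $\varphi_0\sim\mathcal N(0,\lambda\nu^{-1}I)$, $\tilde Y\sim\mathcal N(Y,\lambda I)$, and let $(\theta^*,\varphi^* )$ be the unique saddle point of $\mathcal L_{rf}$. Run projected SGDA: starting from $(\theta_0,\varphi_0)$, for $\ell\ge0$ draw $I_\ell$ uniformly from $[n]$ independently and set $\theta_{\ell+1}=\mathrm{Proj}_{B_f}(\theta_\ell-\eta_\ell\nabla_\theta\mathcal L_{I_\ell}(\theta_\ell,\varphi_\ell))$, $\varphi_{\ell+1}=\mathrm{Proj}_{B_g}(\varphi_\ell+\eta_\ell\nabla_\varphi\mathcal L_{I_\ell}(\theta_\ell,\varphi_\ell))$, with $\eta_\ell=\frac1{\mu(\ell+1)}$, $\mu=\min\{\lambda,\nu\}$, where $\mathrm{Proj}_B$ is Euclidean projection onto the ball of radius $B$. Then for any $\epsilon,\delta,B_1,B_2,B_3>0$ there exist $B_f,B_g>0$ and $L_0=O(\delta^{-1}\epsilon^{-2})$ such that for all $L\ge L_0$, $$\mathbb P\big(\{\|\theta_L-\theta^*\|_2>\epsilon\}\cap E_n\big)\le\delta,\qquad E_n:=\Big\{\|\theta_0\|_2+\|\varphi_0\|_2\le B_1,\ \|\tilde Y\|_2\le B_2,\ \sup_z\tilde k_{z,m}(z,z)+\sup_x\tilde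 k_{x,m}(x,x)\le B_3\Big\},$$ where the probability is over $\theta_0,\varphi_0,\tilde Y$ and the gradient noise.
   Context: $\Phi_f\in\mathbb R^{n\times m}$ has rows $m^{-1/2}\phi_{x,m}(x_i)^\top$, $\Phi_g\in\mathbb R^{n\times m}$ has rows $m^{-1/2}\phi_{z,m}(z_i)^\top$; $\tilde k_{x,m}(x,x')=\frac1m\phi_{x,m}(x)^\top\phi_{x,m}(x')$ and similarly $\tilde k_{z,m}$. $\mathcal L_{rf}(\theta,\varphi)=\theta^\top\Phi_f^\top\Phi_g\varphi-\tilde Y^\top\Phi_g\varphi-\frac12\varphi^\top\Phi_g^\top\Phi_g\varphi-\frac\nu2\|\varphi-\varphi_0\|_2^2+\frac\lambda2\|\theta-\theta_0\|_2^2$ (strongly convex in $\theta$, strongly concave in $\varphi$), and with $E_i=e_ie_i^\top$, $\mathcal L_i(\theta,\varphi)=n(\theta^\top\Phi_f^\top E_i\Phi_g\varphi-\tilde Y^\top E_i\Phi_g\varphi-\frac12\varphi^\top\Phi_g^\top E_i\Phi_g\varphi)-\frac\nu2\|\varphi-\varphi_0\|_2^2+\frac\lambda2\|\theta-\theta_0\|_2^2$, so that $\mathcal L_{rf}=\frac1n\sum_i\mathcal L_i$. *)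

theory Defs
  imports "HOL-Analysis.Analysis" "HOL-Probability.Probability"
begin

definition feat_mat :: "('a \<Rightarrow> real^'m::finite) \<Rightarrow> ('n::finite \<Rightarrow> 'a) \<Rightarrow> real^'m^'n" where
  "feat_mat phi xs = (\<chi> i j. (phi (xs i)) $ j / sqrt (real CARD('m)))"

definition rf_kernel :: "('a \<Rightarrow> real^'m::finite) \<Rightarrow> 'a \<Rightarrow> 'a \<Rightarrow> real" where
  "rf_kernel phi x x' = (phi x \<bullet> phi x') / real CARD('m)"

definition L_rf :: "real^'m::finite^'n::finite \<Rightarrow> real^'m^'n \<Rightarrow> real^'n \<Rightarrow> real^'m \<Rightarrow> real^'m
    \<Rightarrow> real \<Rightarrow> real \<Rightarrow> real^'m \<Rightarrow> real^'m \<Rightarrow> real" where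
  "L_rf Pf Pg Yt th0 ph0 lam nu th ph =
     (Pf *v th) \<bullet> (Pg *v ph) - Yt \<bullet> (Pg *v ph) - 1/2 * ((Pg *v ph) \<bullet> (Pg *v ph))
     - nu/2 * (norm (ph - ph0))^2 + lam/2 * (norm (th - th0))^2"

definition E_mat :: "'n::finite \<Rightarrow> real^'n^'n" where
  "E_mat i = (\<chi> a b. if a = i \<and> b = i then 1 else 0)"

definition L_i :: "real^'m::finite^'n::finite \<Rightarrow> real^'m^'n \<Rightarrow> real^'n \<Rightarrow> real^'m \<Rightarrow> real^'m
    \<Rightarrow> real \<Rightarrow> real \<Rightarrow> 'n \<Rightarrow> real^'m \<Rightarrow> real^'m \<Rightarrow> real" where
  "L_i Pf Pg Yt th0 ph0 lam nu i th ph =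
     real CARD('n) * ((Pf *v th) \<bullet> (E_mat i *v (Pg *v ph)) - Yt \<bullet> (E_mat i *v (Pg *v ph))
        - 1/2 * ((Pg *v ph) \<bullet> (E_mat i *v (Pg *v ph))))
     - nu/2 * (norm (ph - ph0))^2 + lam/2 * (norm (th - th0))^2"

definition grad :: "('a::real_inner \<Rightarrow> real) \<Rightarrow> 'a \<Rightarrow> 'a" where
  "grad f x = (THE g. (f has_derivative (\<lambda>h. g \<bullet> h)) (at x))"

definition saddle_point :: "('a \<Rightarrow> 'b \<Rightarrow> real) \<Rightarrow> 'a \<Rightarrow> 'b \<Rightarrow> bool" where
  "saddle_point f ths phs \<longleftrightarrow> (\<forall>th ph. f ths ph \<le> f ths phs \<and> f ths phs \<le> f th phs)"

definition proj_ball :: "real \<Rightarrow> 'a::euclidean_space \<Rightarrow> 'a" where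
  "proj_ball B v = closest_point (cball 0 B) v"

primrec sgda :: "real^'m::finite^'n::finite \<Rightarrow> real^'m^'n \<Rightarrow> real^'n \<Rightarrow> real^'m \<Rightarrow> real^'m
    \<Rightarrow> real \<Rightarrow> real \<Rightarrow> real \<Rightarrow> real \<Rightarrow> (nat \<Rightarrow> 'n) \<Rightarrow> nat \<Rightarrow> (real^'m) \<times> (real^'m)" where
  "sgda Pf Pg Yt th0 ph0 lam nu Bf Bg I 0 = (th0, ph0)"
| "sgda Pf Pg Yt th0 ph0 lam nu Bf Bg I (Suc l) =
     (let (th, ph) = sgda Pf Pg Yt th0 ph0 lam nu Bf Bg I l;
          eta = 1 / (min lam nu * real (Suc l));
          Lc = L_i Pf Pg Yt th0 ph0 lam nu (I l)
      in (proj_ball Bf (th - eta *\<^sub>R grad (\<lambda>t. Lc t ph) th),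
          proj_ball Bg (ph + eta *\<^sub>R grad (\<lambda>p. Lc th p) ph)))"

definition gauss_vec :: "real^'d::finite \<Rightarrow> real \<Rightarrow> (real^'d) measure" where
  "gauss_vec mu s2 = density lborel (\<lambda>v. ennreal (\<Prod>i\<in>UNIV. normal_density (mu $ i) (sqrt s2) (v $ i)))"

definition index_seq :: "(nat \<Rightarrow> 'n::finite) measure" where
  "index_seq = PiM UNIV (\<lambda>_. measure_pmf (pmf_of_set (UNIV :: 'n set)))"

text \<open>Joint probability space of ((theta0, phi0), (Ytilde, I)).\<close>
definition sgda_space :: "real \<Rightarrow> real \<Rightarrow> real^'n::finite
    \<Rightarrow> (((real^'m::finite) \<times> (real^'m)) \<times> ((real^'n) \<times> (nat \<Rightarrow> 'n))) measure" where
  "sgda_space lam nu Y =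
     (gauss_vec 0 1 \<Otimes>\<^sub>M gauss_vec 0 (lam / nu)) \<Otimes>\<^sub>M (gauss_vec Y lam \<Otimes>\<^sub>M index_seq)"

end

theory Submission
  imports Defs
begin

text \<open>
  The gradient field of the strongly convex-concave objective is an affine map whose linear part
  is strongly monotone with modulus \<open>mu = min lam nu\<close>; hence the saddle point exists, is unique,
  and has norm bounded in terms of \<open>B1\<close>, \<open>B2\<close>, \<open>B3\<close>. On the event \<open>E_n\<close> the initial point, the saddle
  point and (by projection) every iterate lie in a fixed ball, so the stochastic gradients are
  bounded by a constant \<open>G\<close>. Projection onto a ball containing the saddle point is nonexpansive, so
  averaging one step over the uniformly drawn index gives, for the squared distance \<open>D\<close> to the
  saddle point,
  \<open>E D(l+1) \<le> (1 - 2/(l+1)) E D(l) + G\<^sup>2 / (mu\<^sup>2 (l+1)\<^sup>2)\<close>, hence \<open>E D(L) \<le> G\<^sup>2 / (mu\<^sup>2 L)\<close>.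
  Markov's inequality for the index sequence, integrated over the Gaussian initialisation by
  Fubini, bounds the probability of the bad event by \<open>\<delta>\<close> once \<open>L \<ge> C / (\<delta> \<epsilon>\<^sup>2)\<close>.
\<close>

section \<open>The saddle point of the regularised objective\<close>

lemma L_rf_rows:
  fixes P Q :: "real^'m::finite^'n::finite"
  shows "L_rf P Q Yt th0 ph0 lam nu th ph =
     (\<Sum>i\<in>UNIV. (P$i \<bullet> th) * (Q$i \<bullet> ph)) - (\<Sum>i\<in>UNIV. Yt$i * (Q$i \<bullet> ph))
     - 1/2 * (\<Sum>i\<in>UNIV. (Q$i \<bullet> ph)^2) - nu/2 * (norm (ph - ph0))^2 + lam/2 * (norm (th - th0))^2"
  by (simp add: L_rf_def inner_vec_def matrix_vector_mul_component power2_eq_square)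

lemma inner_E_mat: "(x::real^'n::finite) \<bullet> (E_mat i *v w) = x $ i * w $ i"
proof -
  have "(\<Sum>j\<in>UNIV. (if a = i \<and> j = i then 1 else 0) * w $ j) = (if a = i then w $ i else 0)" for a
    by (simp add: if_distrib[of "\<lambda>c. c * _"] cong: if_cong)
  then have "E_mat i *v w = (\<chi> a. if a = i then w $ i else 0)"
    by (simp add: vec_eq_iff matrix_vector_mult_def E_mat_def)
  then show ?thesis by (simp add: inner_vec_def if_distrib cong: if_cong)
qed

lemma L_i_rows:
  fixes P Q :: "real^'m::finite^'n::finite"
  shows "L_i P Q Yt th0 ph0 lam nu i th ph =
     real CARD('n) * ((P$i \<bullet> th) * (Q$i \<bullet> ph) - Yt$i * (Q$i \<bullet> ph) - 1/2 * (Q$i \<bullet> ph)^2)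
     - nu/2 * (norm (ph - ph0))^2 + lam/2 * (norm (th - th0))^2"
  by (simp add: L_i_def inner_E_mat matrix_vector_mul_component power2_eq_square)

text \<open>The partial gradients of \<open>L_rf\<close>: in matrix notation
  \<open>Pf\<^sup>T Pg ph + lam (th - th0)\<close> and \<open>Pg\<^sup>T (Pf th - Yt - Pg ph) - nu (ph - ph0)\<close>.\<close>

definition full_grad_th :: "real^'m::finite^'n::finite \<Rightarrow> real^'m^'n \<Rightarrow> real^'m \<Rightarrow> real
    \<Rightarrow> real^'m \<Rightarrow> real^'m \<Rightarrow> real^'m" where
  "full_grad_th P Q th0 lam th ph = (\<Sum>i\<in>UNIV. (Q$i \<bullet> ph) *\<^sub>R P$i) + lam *\<^sub>R (th - th0)"

definition full_grad_ph :: "real^'m::finite^'n::finite \<Rightarrow> real^'m^'n \<Rightarrow> real^'n \<Rightarrow> real^'m \<Rightarrow> real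
    \<Rightarrow> real^'m \<Rightarrow> real^'m \<Rightarrow> real^'m" where
  "full_grad_ph P Q Yt ph0 nu th ph =
     (\<Sum>i\<in>UNIV. ((P$i \<bullet> th) - Yt$i - (Q$i \<bullet> ph)) *\<^sub>R Q$i) - nu *\<^sub>R (ph - ph0)"

lemma L_rf_expansion_th:
  fixes P Q :: "real^'m::finite^'n::finite"
  shows "L_rf P Q Yt th0 ph0 lam nu (th + u) ph - L_rf P Q Yt th0 ph0 lam nu th ph
    = full_grad_th P Q th0 lam th ph \<bullet> u + lam/2 * (norm u)^2"
  unfolding L_rf_rows full_grad_th_def power2_norm_eq_inner
  by (simp add: inner_sum_left inner_sum_right inner_add_left inner_add_right inner_diff_left
      inner_diff_right sum.distrib algebra_simps inner_commute)

lemma L_rf_expansion_ph: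
  fixes P Q :: "real^'m::finite^'n::finite"
  shows "L_rf P Q Yt th0 ph0 lam nu th (ph + v) - L_rf P Q Yt th0 ph0 lam nu th ph
    = full_grad_ph P Q Yt ph0 nu th ph \<bullet> v - 1/2 * (\<Sum>i\<in>UNIV. (Q$i \<bullet> v)^2) - nu/2 * (norm v)^2"
  unfolding L_rf_rows full_grad_ph_def power2_norm_eq_inner
  by (simp add: inner_sum_left inner_sum_right inner_add_left inner_add_right inner_diff_left
      inner_diff_right power2_eq_square sum.distrib sum_subtractf algebra_simps inner_commute sum_distrib_left)

lemma full_grad_strongly_monotone_identity:
  fixes P Q :: "real^'m::finite^'n::finite"
  shows "(full_grad_th P Q th0 lam th ph - full_grad_th P Q th0 lam th' ph') \<bullet> (th - th')
       - (full_grad_ph P Q Yt ph0 nu th ph - full_grad_ph P Q Yt ph0 nu th' ph') \<bullet> (ph - ph')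
     = lam * (norm (th - th'))^2 + (\<Sum>i\<in>UNIV. (Q$i \<bullet> (ph - ph'))^2) + nu * (norm (ph - ph'))^2"
proof -
  have diff_th: "full_grad_th P Q th0 lam th ph - full_grad_th P Q th0 lam th' ph'
      = (\<Sum>i\<in>UNIV. (Q$i \<bullet> (ph - ph')) *\<^sub>R P$i) + lam *\<^sub>R (th - th')"
    by (simp add: full_grad_th_def sum_subtractf[symmetric] inner_diff_right scaleR_diff_left
        algebra_simps)
  have diff_ph: "full_grad_ph P Q Yt ph0 nu th ph - full_grad_ph P Q Yt ph0 nu th' ph'
      = (\<Sum>i\<in>UNIV. ((P$i \<bullet> (th - th')) - (Q$i \<bullet> (ph - ph'))) *\<^sub>R Q$i) - nu *\<^sub>R (ph - ph')"
    by (simp add: full_grad_ph_def inner_diff_right scaleR_diff_left sum.distrib sum_subtractf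
        algebra_simps)
  show ?thesis
    unfolding diff_th diff_ph power2_norm_eq_inner
    by (simp add: inner_sum_left inner_sum_right inner_add_left inner_diff_left power2_eq_square
        sum_subtractf sum.distrib sum_distrib_left algebra_simps inner_commute)
qed

lemma nonpos_if_le_quadratic:
  fixes a c :: real
  assumes "\<And>s. s > 0 \<Longrightarrow> a * s \<le> c * s^2"
  shows "a \<le> 0"
proof (rule ccontr)
  assume "\<not> a \<le> 0"
  then have a: "a > 0" by simp
  then have c: "c > 0" using assms[of 1] by simp
  have "a * (a / (2 * c)) \<le> c * (a / (2 * c))^2" using a c by (intro assms) simp
  then show False using a c by (simp add: power2_eq_square field_simps)
qed

lemma saddle_point_L_rf_iff:
  fixes P Q :: "real^'m::finite^'n::finite"
  assumes "lam > 0" "nu > 0"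
  shows "saddle_point (L_rf P Q Yt th0 ph0 lam nu) th ph \<longleftrightarrow>
     full_grad_th P Q th0 lam th ph = 0 \<and> full_grad_ph P Q Yt ph0 nu th ph = 0"
proof
  let ?L = "L_rf P Q Yt th0 ph0 lam nu"
  let ?F = "full_grad_th P Q th0 lam th ph" and ?G = "full_grad_ph P Q Yt ph0 nu th ph"
  assume saddle: "saddle_point ?L th ph"
  have "(norm ?F)^2 * s \<le> lam/2 * (norm ?F)^2 * s^2" if "s > 0" for s
  proof -
    have "0 \<le> ?L (th + (- s) *\<^sub>R ?F) ph - ?L th ph"
      using saddle by (simp add: saddle_point_def)
    then show ?thesis unfolding L_rf_expansion_th
      by (simp add: power2_norm_eq_inner power_mult_distrib algebra_simps)
  qed
  then have "(norm ?F)^2 \<le> 0" by (rule nonpos_if_le_quadratic)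
  moreover have "(norm ?G)^2 * s \<le> (1/2 * (\<Sum>i\<in>UNIV. (Q$i \<bullet> ?G)^2) + nu/2 * (norm ?G)^2) * s^2"
    if "s > 0" for s
  proof -
    have "?L th (ph + s *\<^sub>R ?G) - ?L th ph \<le> 0"
      using saddle by (simp add: saddle_point_def)
    then show ?thesis unfolding L_rf_expansion_ph
      by (simp add: power2_norm_eq_inner power_mult_distrib sum_distrib_left algebra_simps)
  qed
  then have "(norm ?G)^2 \<le> 0" by (rule nonpos_if_le_quadratic)
  ultimately show "?F = 0 \<and> ?G = 0" by simp
next
  let ?L = "L_rf P Q Yt th0 ph0 lam nu"
  assume grad0: "full_grad_th P Q th0 lam th ph = 0 \<and> full_grad_ph P Q Yt ph0 nu th ph = 0"
  have "?L th ph \<le> ?L (th + u) ph" for u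
  proof -
    have "0 \<le> lam/2 * (norm u)^2" using assms by simp
    then show ?thesis using L_rf_expansion_th[of P Q Yt th0 ph0 lam nu th u ph] grad0 by simp
  qed
  moreover have "?L th (ph + v) \<le> ?L th ph" for v
  proof -
    have "0 \<le> 1/2 * (\<Sum>i\<in>UNIV. (Q$i \<bullet> v)^2) + nu/2 * (norm v)^2"
      using assms by (simp add: sum_nonneg)
    then show ?thesis using L_rf_expansion_ph[of P Q Yt th0 ph0 lam nu th ph v] grad0 by simp
  qed
  ultimately show "saddle_point ?L th ph"
    unfolding saddle_point_def by (metis add.commute diff_add_cancel)
qed

definition saddle_op :: "real^'m::finite^'n::finite \<Rightarrow> real^'m^'n \<Rightarrow> real \<Rightarrow> real
    \<Rightarrow> (real^'m) \<times> (real^'m) \<Rightarrow> (real^'m) \<times> (real^'m)" where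
  "saddle_op P Q lam nu z = (full_grad_th P Q 0 lam (fst z) (snd z), full_grad_ph P Q 0 0 nu (fst z) (snd z))"

definition saddle_rhs :: "real^'m::finite^'n::finite \<Rightarrow> real^'n \<Rightarrow> real^'m \<Rightarrow> real^'m \<Rightarrow> real \<Rightarrow> real
    \<Rightarrow> (real^'m) \<times> (real^'m)" where
  "saddle_rhs Q Yt th0 ph0 lam nu = (lam *\<^sub>R th0, (\<Sum>i\<in>UNIV. Yt$i *\<^sub>R Q$i) - nu *\<^sub>R ph0)"

lemma full_grad_eq_saddle_op:
  "(full_grad_th P Q th0 lam th ph, full_grad_ph P Q Yt ph0 nu th ph)
     = saddle_op P Q lam nu (th, ph) - saddle_rhs Q Yt th0 ph0 lam nu"
  by (simp add: saddle_op_def saddle_rhs_def full_grad_th_def full_grad_ph_def algebra_simps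
      scaleR_diff_left sum_subtractf sum.distrib)

lemma linear_saddle_op:
  fixes P Q :: "real^'m::finite^'n::finite"
  shows "linear (saddle_op P Q lam nu)"
proof (rule linearI)
  fix z w :: "(real^'m) \<times> (real^'m)" and c :: real
  show "saddle_op P Q lam nu (z + w) = saddle_op P Q lam nu z + saddle_op P Q lam nu w"
    by (simp add: saddle_op_def full_grad_th_def full_grad_ph_def inner_add_right
        scaleR_add_left sum.distrib sum_subtractf algebra_simps)
  show "saddle_op P Q lam nu (c *\<^sub>R z) = c *\<^sub>R saddle_op P Q lam nu z"
    by (simp add: saddle_op_def full_grad_th_def full_grad_ph_def scaleR_sum_right algebra_simps)
qed

lemma inj_saddle_op:
  fixes P Q :: "real^'m::finite^'n::finite"
  assumes "lam > 0" "nu > 0"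
  shows "inj (saddle_op P Q lam nu)"
proof (rule injI)
  fix z z' :: "(real^'m) \<times> (real^'m)"
  assume "saddle_op P Q lam nu z = saddle_op P Q lam nu z'"
  then have "lam * (norm (fst z - fst z'))^2 + (\<Sum>i\<in>UNIV. (Q$i \<bullet> (snd z - snd z'))^2)
      + nu * (norm (snd z - snd z'))^2 = 0"
    using full_grad_strongly_monotone_identity[of P Q 0 lam "fst z" "snd z" "fst z'" "snd z'" 0 0 nu]
    by (simp add: saddle_op_def)
  moreover have "0 \<le> (\<Sum>i\<in>UNIV. (Q$i \<bullet> (snd z - snd z'))^2)" by (simp add: sum_nonneg)
  moreover have "0 \<le> lam * (norm (fst z - fst z'))^2" "0 \<le> nu * (norm (snd z - snd z'))^2"
    using assms by simp_all
  ultimately have "lam * (norm (fst z - fst z'))^2 = 0" "nu * (norm (snd z - snd z'))^2 = 0"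
    by linarith+
  then show "z = z'" using assms by (simp add: prod_eq_iff)
qed

definition saddle_sol :: "real^'m::finite^'n::finite \<Rightarrow> real^'m^'n \<Rightarrow> real^'n \<Rightarrow> real^'m \<Rightarrow> real^'m
    \<Rightarrow> real \<Rightarrow> real \<Rightarrow> (real^'m) \<times> (real^'m)" where
  "saddle_sol P Q Yt th0 ph0 lam nu = inv (saddle_op P Q lam nu) (saddle_rhs Q Yt th0 ph0 lam nu)"

lemma saddle_point_L_rf_iff_saddle_sol:
  fixes P Q :: "real^'m::finite^'n::finite"
  assumes "lam > 0" "nu > 0"
  shows "saddle_point (L_rf P Q Yt th0 ph0 lam nu) th ph \<longleftrightarrow> (th, ph) = saddle_sol P Q Yt th0 ph0 lam nu"
proof -
  let ?T = "saddle_op P Q lam nu" and ?b = "saddle_rhs Q Yt th0 ph0 lam nu"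
  have "surj ?T"
    by (simp add: linear_injective_imp_surjective linear_saddle_op inj_saddle_op assms)
  then have "?T (th, ph) = ?b \<longleftrightarrow> (th, ph) = inv ?T ?b"
    using inj_saddle_op[OF assms] by (metis inv_f_f surj_f_inv_f)
  then show ?thesis
    unfolding saddle_point_L_rf_iff[OF assms] saddle_sol_def
    using full_grad_eq_saddle_op[of P Q th0 lam th ph Yt ph0 nu] by (simp add: prod_eq_iff)
qed

lemma The_saddle_point_L_rf:
  fixes P Q :: "real^'m::finite^'n::finite"
  assumes "lam > 0" "nu > 0"
  shows "(THE p. saddle_point (L_rf P Q Yt th0 ph0 lam nu) (fst p) (snd p)) = saddle_sol P Q Yt th0 ph0 lam nu"
proof (rule the_equality)
  show "saddle_point (L_rf P Q Yt th0 ph0 lam nu) (fst (saddle_sol P Q Yt th0 ph0 lam nu))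
      (snd (saddle_sol P Q Yt th0 ph0 lam nu))"
    by (subst saddle_point_L_rf_iff_saddle_sol[OF assms]) simp
qed (subst (asm) saddle_point_L_rf_iff_saddle_sol[OF assms], simp)

lemma full_grad_saddle_sol:
  fixes P Q :: "real^'m::finite^'n::finite"
  assumes "lam > 0" "nu > 0" "z = saddle_sol P Q Yt th0 ph0 lam nu"
  shows "full_grad_th P Q th0 lam (fst z) (snd z) = 0" "full_grad_ph P Q Yt ph0 nu (fst z) (snd z) = 0"
proof -
  have "saddle_point (L_rf P Q Yt th0 ph0 lam nu) (fst z) (snd z)"
    unfolding assms(3) by (subst saddle_point_L_rf_iff_saddle_sol[OF assms(1,2)]) simp
  then show "full_grad_th P Q th0 lam (fst z) (snd z) = 0" "full_grad_ph P Q Yt ph0 nu (fst z) (snd z) = 0"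
    using saddle_point_L_rf_iff[OF assms(1,2)] by blast+
qed

lemma full_grad_inner_saddle_sol_ge:
  fixes P Q :: "real^'m::finite^'n::finite"
  assumes "lam > 0" "nu > 0" "z = saddle_sol P Q Yt th0 ph0 lam nu"
  shows "min lam nu * ((norm (th - fst z))^2 + (norm (ph - snd z))^2)
    \<le> full_grad_th P Q th0 lam th ph \<bullet> (th - fst z) - full_grad_ph P Q Yt ph0 nu th ph \<bullet> (ph - snd z)"
proof -
  have "min lam nu * ((norm (th - fst z))^2 + (norm (ph - snd z))^2)
      \<le> lam * (norm (th - fst z))^2 + (\<Sum>i\<in>UNIV. (Q$i \<bullet> (ph - snd z))^2) + nu * (norm (ph - snd z))^2"
    using mult_right_mono[of "min lam nu" lam "(norm (th - fst z))^2"]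
      mult_right_mono[of "min lam nu" nu "(norm (ph - snd z))^2"]
    by (simp add: distrib_left add_mono sum_nonneg add_increasing2)
  also have "\<dots> = full_grad_th P Q th0 lam th ph \<bullet> (th - fst z) - full_grad_ph P Q Yt ph0 nu th ph \<bullet> (ph - snd z)"
    using full_grad_strongly_monotone_identity[of P Q th0 lam th ph "fst z" "snd z" Yt ph0 nu]
      full_grad_saddle_sol[OF assms] by simp
  finally show ?thesis .
qed

lemma sum_le_of_sum_squares_le:
  fixes x y mu R :: real
  assumes "mu > 0" "x \<ge> 0" "y \<ge> 0" "R \<ge> 0" "mu * (x^2 + y^2) \<le> R * (x + y)"
  shows "x + y \<le> 2 * R / mu"
proof (cases "x + y = 0")
  case False
  then have pos: "x + y > 0" using assms by simp
  have "(x + y)^2 \<le> 2 * (x^2 + y^2)"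
    using zero_le_power2[of "x - y"] by (simp add: power2_eq_square algebra_simps)
  then have "mu * (x + y)^2 \<le> 2 * (mu * (x^2 + y^2))"
    using assms(1) by (metis mult.left_commute mult_left_mono less_imp_le)
  also have "\<dots> \<le> 2 * R * (x + y)" using assms(5) by simp
  finally have "mu * (x + y) * (x + y) \<le> 2 * R * (x + y)" by (simp add: power2_eq_square)
  then have "mu * (x + y) \<le> 2 * R" using pos by simp
  then show ?thesis using assms(1) by (simp add: field_simps)
qed (use assms in simp)

lemma norm_saddle_sol_le:
  fixes P Q :: "real^'m::finite^'n::finite"
  assumes lam: "lam > 0" and nu: "nu > 0" and th0: "norm th0 \<le> B" and ph0: "norm ph0 \<le> B"
    and Yt: "\<And>i. \<bar>Yt$i\<bar> \<le> B2" and Q: "\<And>i. norm (Q$i) \<le> k"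
    and z: "z = saddle_sol P Q Yt th0 ph0 lam nu"
  shows "norm (fst z) + norm (snd z) \<le> 2 * (lam * B + real CARD('n) * B2 * k + nu * B) / min lam nu"
proof -
  define R where "R = lam * B + real CARD('n) * B2 * k + nu * B"
  define F0 where "F0 = full_grad_th P Q th0 lam 0 0"
  define G0 where "G0 = full_grad_ph P Q Yt ph0 nu 0 0"
  have B: "B \<ge> 0" using th0 norm_ge_zero order_trans by blast
  have B2: "B2 \<ge> 0" using Yt abs_ge_zero order_trans by blast
  have k: "k \<ge> 0" using Q norm_ge_zero order_trans by blast
  have "norm F0 = lam * norm th0" unfolding F0_def full_grad_th_def using lam by simp
  also have "\<dots> \<le> R" unfolding R_def using lam nu th0 B B2 k by (simp add: add_increasing2)
  finally have F0: "norm F0 \<le> R" .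
  have "norm (\<Sum>i\<in>UNIV. Yt$i *\<^sub>R Q$i) \<le> (\<Sum>i\<in>(UNIV::'n set). B2 * k)"
    by (rule order_trans[OF norm_sum sum_mono]) (simp add: Yt Q B2 mult_mono)
  moreover have "G0 = nu *\<^sub>R ph0 - (\<Sum>i\<in>UNIV. Yt$i *\<^sub>R Q$i)"
    by (simp add: G0_def full_grad_ph_def sum_negf)
  then have "norm G0 \<le> nu * norm ph0 + norm (\<Sum>i\<in>UNIV. Yt$i *\<^sub>R Q$i)"
    using nu by (metis norm_triangle_ineq4 norm_scaleR abs_of_pos)
  moreover have "nu * norm ph0 \<le> nu * B" using ph0 nu by simp
  ultimately have "norm G0 \<le> nu * B + real CARD('n) * (B2 * k)" by simp
  then have G0: "norm G0 \<le> R" unfolding R_def using lam B by (simp add: algebra_simps add_increasing)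
  let ?x = "norm (fst z)" and ?y = "norm (snd z)"
  have "min lam nu * (?x^2 + ?y^2) \<le> G0 \<bullet> snd z - F0 \<bullet> fst z"
    using full_grad_inner_saddle_sol_ge[OF lam nu z, of 0 0] by (simp add: F0_def G0_def)
  also have "\<dots> \<le> R * ?y + R * ?x"
    using norm_cauchy_schwarz[of G0 "snd z"] Cauchy_Schwarz_ineq2[of F0 "fst z"]
      mult_right_mono[OF G0 norm_ge_zero[of "snd z"]] mult_right_mono[OF F0 norm_ge_zero[of "fst z"]]
    by linarith
  finally show ?thesis unfolding R_def[symmetric] using lam nu B B2 k
    by (intro sum_le_of_sum_squares_le) (simp_all add: algebra_simps R_def)
qed

section \<open>Projected stochastic gradient steps\<close>

definition sample_grad_th :: "real^'m::finite^'n::finite \<Rightarrow> real^'m^'n \<Rightarrow> real^'m \<Rightarrow> real \<Rightarrow> 'n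
    \<Rightarrow> real^'m \<Rightarrow> real^'m \<Rightarrow> real^'m" where
  "sample_grad_th P Q th0 lam i th ph = (real CARD('n) * (Q$i \<bullet> ph)) *\<^sub>R P$i + lam *\<^sub>R (th - th0)"

definition sample_grad_ph :: "real^'m::finite^'n::finite \<Rightarrow> real^'m^'n \<Rightarrow> real^'n \<Rightarrow> real^'m \<Rightarrow> real
    \<Rightarrow> 'n \<Rightarrow> real^'m \<Rightarrow> real^'m \<Rightarrow> real^'m" where
  "sample_grad_ph P Q Yt ph0 nu i th ph =
     (real CARD('n) * ((P$i \<bullet> th) - Yt$i - (Q$i \<bullet> ph))) *\<^sub>R Q$i - nu *\<^sub>R (ph - ph0)"

lemma sum_sample_grad_th:
  fixes P Q :: "real^'m::finite^'n::finite"
  shows "(\<Sum>i\<in>UNIV. sample_grad_th P Q th0 lam i th ph) = real CARD('n) *\<^sub>R full_grad_th P Q th0 lam th ph"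
  by (simp add: sample_grad_th_def full_grad_th_def sum.distrib scaleR_sum_right scaleR_add_right
      sum_constant_scaleR del: sum_constant)

lemma sum_sample_grad_ph:
  fixes P Q :: "real^'m::finite^'n::finite"
  shows "(\<Sum>i\<in>UNIV. sample_grad_ph P Q Yt ph0 nu i th ph) = real CARD('n) *\<^sub>R full_grad_ph P Q Yt ph0 nu th ph"
  by (simp add: sample_grad_ph_def full_grad_ph_def sum_subtractf scaleR_sum_right scaleR_diff_right
      sum_constant_scaleR del: sum_constant)

lemma grad_eqI:
  fixes f :: "'a::real_inner \<Rightarrow> real"
  assumes "(f has_derivative (\<lambda>h. g \<bullet> h)) (at x)"
  shows "grad f x = g"
  unfolding grad_def
proof (rule the_equality)
  fix g' assume "(f has_derivative (\<lambda>h. g' \<bullet> h)) (at x)"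
  with assms have "g \<bullet> h = g' \<bullet> h" for h by (metis has_derivative_unique)
  from this[of "g - g'"] this[of "g' - g"] show "g' = g"
    by (metis inner_diff_left inner_eq_zero_iff right_minus_eq)
qed (fact assms)

lemma grad_L_i_th:
  fixes P Q :: "real^'m::finite^'n::finite"
  shows "grad (\<lambda>t. L_i P Q Yt th0 ph0 lam nu i t ph) th = sample_grad_th P Q th0 lam i th ph"
  unfolding L_i_rows power2_norm_eq_inner sample_grad_th_def
  by (rule grad_eqI, rule has_derivative_eq_rhs, (rule derivative_eq_intros refl)+)
    (simp add: fun_eq_iff algebra_simps inner_commute)

lemma grad_L_i_ph:
  fixes P Q :: "real^'m::finite^'n::finite"
  shows "grad (\<lambda>p. L_i P Q Yt th0 ph0 lam nu i th p) ph = sample_grad_ph P Q Yt ph0 nu i th ph"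
  unfolding L_i_rows power2_norm_eq_inner sample_grad_ph_def
  by (rule grad_eqI, rule has_derivative_eq_rhs, (rule derivative_eq_intros refl)+)
    (simp add: fun_eq_iff algebra_simps inner_commute power2_eq_square)

definition sgda_step :: "real^'m::finite^'n::finite \<Rightarrow> real^'m^'n \<Rightarrow> real^'n \<Rightarrow> real^'m \<Rightarrow> real^'m
    \<Rightarrow> real \<Rightarrow> real \<Rightarrow> real \<Rightarrow> real \<Rightarrow> real \<Rightarrow> 'n
    \<Rightarrow> (real^'m) \<times> (real^'m) \<Rightarrow> (real^'m) \<times> (real^'m)" where
  "sgda_step P Q Yt th0 ph0 lam nu Bf Bg eta i z =
     (proj_ball Bf (fst z - eta *\<^sub>R sample_grad_th P Q th0 lam i (fst z) (snd z)),
      proj_ball Bg (snd z + eta *\<^sub>R sample_grad_ph P Q Yt ph0 nu i (fst z) (snd z)))"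

lemma sgda_Suc:
  fixes P Q :: "real^'m::finite^'n::finite"
  shows "sgda P Q Yt th0 ph0 lam nu Bf Bg I (Suc l) =
     sgda_step P Q Yt th0 ph0 lam nu Bf Bg (1 / (min lam nu * real (Suc l))) (I l)
       (sgda P Q Yt th0 ph0 lam nu Bf Bg I l)"
  by (simp add: sgda_step_def Let_def split_beta grad_L_i_th grad_L_i_ph del: of_nat_Suc)

lemma sgda_cong_prefix:
  "(\<And>l. l < t \<Longrightarrow> I l = J l) \<Longrightarrow>
     sgda P Q Yt th0 ph0 lam nu Bf Bg I t = sgda P Q Yt th0 ph0 lam nu Bf Bg J t"
  by (induction t) (simp_all add: Let_def)

lemma norm_proj_ball_le: "B \<ge> 0 \<Longrightarrow> norm (proj_ball B x) \<le> B"
  using closest_point_in_set[of "cball 0 B" x] by (simp add: proj_ball_def)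

lemma norm_proj_ball_diff_le:
  assumes "norm w \<le> B"
  shows "norm (proj_ball B x - w) \<le> norm (x - w)"
proof -
  have "B \<ge> 0" using assms norm_ge_zero order_trans by blast
  then have "dist (closest_point (cball 0 B) x) (closest_point (cball 0 B) w) \<le> dist x w"
    by (intro closest_point_lipschitz) auto
  moreover have "closest_point (cball 0 B) w = w"
    using assms by (intro closest_point_self) auto
  ultimately show ?thesis by (simp add: proj_ball_def dist_norm)
qed

lemma continuous_on_proj_ball: "B \<ge> 0 \<Longrightarrow> continuous_on S (proj_ball B)"
  unfolding proj_ball_def by (intro continuous_on_closest_point) auto

section \<open>Mean-square convergence of the iterates\<close>

lemma sum_PiE_lessThan_Suc:
  "(\<Sum>p\<in>PiE {..<Suc t} (\<lambda>_. A). f p) = (\<Sum>i\<in>A. \<Sum>g\<in>PiE {..<t} (\<lambda>_. A). f (g(t := i)))"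
proof -
  have "(\<Sum>p\<in>PiE {..<Suc t} (\<lambda>_. A). f p)
      = (\<Sum>p\<in>(\<lambda>(i, g). g(t := i)) ` (A \<times> PiE {..<t} (\<lambda>_. A)). f p)"
    by (simp add: lessThan_Suc PiE_insert_eq)
  also have "\<dots> = (\<Sum>x\<in>A \<times> PiE {..<t} (\<lambda>_. A). f ((snd x)(t := fst x)))"
    by (subst sum.reindex) (auto intro!: inj_combinator simp: split_beta)
  also have "\<dots> = (\<Sum>i\<in>A. \<Sum>g\<in>PiE {..<t} (\<lambda>_. A). f (g(t := i)))"
    by (simp add: sum.cartesian_product split_beta)
  finally show ?thesis .
qed

lemma one_over_t_recursion:
  fixes a K t :: real
  assumes "t \<ge> 1" "K \<ge> 0" "a \<le> K / t"
  shows "(1 - 2 / (t + 1)) * a + K / (t + 1)^2 \<le> K / (t + 1)"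
proof -
  have "(1 - 2 / (t + 1)) * a \<le> (1 - 2 / (t + 1)) * (K / t)"
    using assms by (intro mult_left_mono) (simp_all add: field_simps)
  also have "\<dots> + K / (t + 1)^2 = K / (t + 1) - K / (t * (t + 1)^2)"
  proof -
    have "t \<noteq> 0" "t + 1 \<noteq> 0" using assms(1) by simp_all
    then show ?thesis by (simp add: divide_simps power2_eq_square) (simp add: algebra_simps)
  qed
  also have "\<dots> \<le> K / (t + 1)" using assms(1,2) by simp
  finally show ?thesis by simp
qed

lemma emeasure_index_seq_prefix_set:
  fixes X :: "(nat \<Rightarrow> 'n::finite) set"
  assumes X: "X \<subseteq> PiE {..<L} (\<lambda>_. UNIV)"
  shows "emeasure (index_seq :: (nat \<Rightarrow> 'n) measure) {I. restrict I {..<L} \<in> X} = real (card X) / real CARD('n) ^ L"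
proof -
  let ?M = "\<lambda>_::nat. measure_pmf (pmf_of_set (UNIV :: 'n set))"
  interpret product_prob_space ?M UNIV
    by (rule product_prob_spaceI) (rule prob_space_measure_pmf)
  have finX: "finite X" using X by (rule finite_subset) (simp add: finite_PiE)
  have single: "{p} = PiE {..<L} (\<lambda>j. {p j})" if "p \<in> X" for p
    using X that PiE_singleton[of p "{..<L}"] by (auto simp: PiE_def)
  have single_sets: "{p} \<in> sets (PiM {..<L} ?M)" if "p \<in> X" for p
    using that by (subst single) auto
  have "X = (\<Union>p\<in>X. {p})" by auto
  also have "\<dots> \<in> sets (PiM {..<L} ?M)" using finX single_sets by (intro sets.finite_UN) auto
  finally have X_sets: "X \<in> sets (PiM {..<L} ?M)" .
  have "{I. restrict I {..<L} \<in> X} = prod_emb UNIV ?M {..<L} X"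
    by (auto simp: prod_emb_def space_PiM)
  then have "emeasure index_seq {I. restrict I {..<L} \<in> X} = emeasure (PiM {..<L} ?M) X"
    unfolding index_seq_def using X_sets by (simp add: emeasure_PiM_emb')
  also have "\<dots> = (\<Sum>p\<in>X. emeasure (PiM {..<L} ?M) {p})"
    by (rule emeasure_eq_sum_singleton[OF finX single_sets])
  also have "\<dots> = (\<Sum>p\<in>X. ennreal (1 / real CARD('n) ^ L))"
  proof (rule sum.cong[OF refl])
    fix p assume "p \<in> X"
    then have "emeasure (PiM {..<L} ?M) {p} = (\<Prod>j<L. emeasure (?M j) {p j})"
      by (subst single) (auto intro!: emeasure_PiM)
    also have "\<dots> = ennreal (1 / real CARD('n) ^ L)"
      by (simp add: emeasure_pmf_single) (subst ennreal_power, auto simp: power_one_over)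
    finally show "emeasure (PiM {..<L} ?M) {p} = ennreal (1 / real CARD('n) ^ L)" .
  qed
  also have "\<dots> = real (card X) / real CARD('n) ^ L"
    by (simp add: ennreal_of_nat_eq_real_of_nat ennreal_mult'[symmetric])
  finally show ?thesis .
qed

lemma prob_space_index_seq: "prob_space (index_seq :: (nat \<Rightarrow> 'n::finite) measure)"
  unfolding index_seq_def by (rule prob_space_PiM) (rule prob_space_measure_pmf)

lemma abs_inner_le:
  fixes x y :: "'a::real_inner"
  assumes "norm x \<le> a" "norm y \<le> b"
  shows "\<bar>x \<bullet> y\<bar> \<le> a * b"
proof -
  have a: "0 \<le> a" using assms(1) norm_ge_zero order_trans by blast
  show ?thesis using Cauchy_Schwarz_ineq2[of x y] mult_mono[OF assms a norm_ge_zero] by linarith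
qed

text \<open>Bound on the stochastic gradients over the ball of radius \<open>R\<close>, see
  \<open>norm_sample_grad_th_le\<close> and \<open>norm_sample_grad_ph_le\<close> below.\<close>

definition sgda_grad_bound :: "nat \<Rightarrow> real \<Rightarrow> real \<Rightarrow> real \<Rightarrow> real \<Rightarrow> real \<Rightarrow> real" where
  "sgda_grad_bound n lam nu R Ymax k =
     (real n * k * k * R + 2 * lam * R) + (real n * (2 * k * R + Ymax) * k + 2 * nu * R)"

locale bounded_sgda =
  fixes P Q :: "real^'m::finite^'n::finite" and Yt :: "real^'n" and th0 ph0 :: "real^'m"
    and lam nu R Ymax k :: real
  assumes lam_pos: "lam > 0" and nu_pos: "nu > 0"
    and norm_th0: "norm th0 \<le> R" and norm_ph0: "norm ph0 \<le> R"
    and abs_Yt: "\<And>i. \<bar>Yt$i\<bar> \<le> Ymax"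
    and norm_P: "\<And>i. norm (P$i) \<le> k" and norm_Q: "\<And>i. norm (Q$i) \<le> k"
    and norm_saddle_sol: "norm (fst (saddle_sol P Q Yt th0 ph0 lam nu)) \<le> R"
      "norm (snd (saddle_sol P Q Yt th0 ph0 lam nu)) \<le> R"
begin

abbreviation "zs \<equiv> saddle_sol P Q Yt th0 ph0 lam nu"
abbreviation "mu \<equiv> min lam nu"
abbreviation "iter t I \<equiv> sgda P Q Yt th0 ph0 lam nu R R I t"
abbreviation "step eta i \<equiv> sgda_step P Q Yt th0 ph0 lam nu R R eta i"
abbreviation "idx_prefixes (t::nat) \<equiv> PiE {..<t} (\<lambda>_. UNIV :: 'n set)"

definition err :: "(real^'m) \<times> (real^'m) \<Rightarrow> real" where
  "err z = (norm (fst z - fst zs))^2 + (norm (snd z - snd zs))^2"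

definition grad_bound :: real where
  "grad_bound = sgda_grad_bound CARD('n) lam nu R Ymax k"

definition err_const :: real where
  "err_const = (grad_bound / mu)^2"

lemma err_const_nonneg: "err_const \<ge> 0" by (simp add: err_const_def)

text \<open>The \<open>t\<close>-th iterate only depends on the first \<open>t\<close> indices, so this is the expectation of
  \<open>err (iter t I)\<close> under \<open>index_seq\<close>.\<close>

definition mean_err :: "nat \<Rightarrow> real" where
  "mean_err t = (\<Sum>p\<in>idx_prefixes t. err (iter t p)) / real CARD('n) ^ t"

lemma R_nonneg: "R \<ge> 0" using norm_th0 norm_ge_zero order_trans by blast
lemma k_nonneg: "k \<ge> 0" using norm_P norm_ge_zero order_trans by blast
lemma Ymax_nonneg: "Ymax \<ge> 0" using abs_Yt abs_ge_zero order_trans by blast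

lemma err_nonneg: "err z \<ge> 0" by (simp add: err_def)

lemma iter_in_ball: "norm (fst (iter t I)) \<le> R \<and> norm (snd (iter t I)) \<le> R"
proof (cases t)
  case (Suc l)
  then show ?thesis unfolding Suc sgda_Suc sgda_step_def by (simp add: norm_proj_ball_le R_nonneg)
qed (simp add: norm_th0 norm_ph0)

lemma norm_sample_grad_th_le:
  assumes th: "norm th \<le> R" and ph: "norm ph \<le> R"
  shows "norm (sample_grad_th P Q th0 lam i th ph) \<le> real CARD('n) * k * k * R + 2 * lam * R"
proof -
  have "norm (sample_grad_th P Q th0 lam i th ph)
      \<le> norm ((real CARD('n) * (Q$i \<bullet> ph)) *\<^sub>R P$i) + norm (lam *\<^sub>R (th - th0))"
    unfolding sample_grad_th_def by (rule norm_triangle_ineq)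
  also have "\<dots> = real CARD('n) * \<bar>Q$i \<bullet> ph\<bar> * norm (P$i) + lam * norm (th - th0)"
    using lam_pos by (simp add: abs_mult)
  also have "\<dots> \<le> real CARD('n) * (k * R) * k + lam * (R + R)"
    using abs_inner_le[OF norm_Q ph] norm_P norm_triangle_le_diff[OF add_mono[OF th norm_th0]] lam_pos k_nonneg R_nonneg
    by (intro add_mono mult_mono mult_left_mono) auto
  finally show ?thesis by (simp add: mult_ac)
qed

lemma norm_sample_grad_ph_le:
  assumes th: "norm th \<le> R" and ph: "norm ph \<le> R"
  shows "norm (sample_grad_ph P Q Yt ph0 nu i th ph) \<le> real CARD('n) * (2 * k * R + Ymax) * k + 2 * nu * R"
proof -
  let ?r = "(P$i \<bullet> th) - Yt$i - (Q$i \<bullet> ph)"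
  have r: "\<bar>?r\<bar> \<le> 2 * k * R + Ymax"
    using abs_inner_le[OF norm_P[of i] th] abs_inner_le[OF norm_Q[of i] ph] abs_Yt[of i] by linarith
  have "norm (sample_grad_ph P Q Yt ph0 nu i th ph)
      \<le> norm ((real CARD('n) * ?r) *\<^sub>R Q$i) + norm (nu *\<^sub>R (ph - ph0))"
    unfolding sample_grad_ph_def by (rule norm_triangle_ineq4)
  also have "\<dots> = real CARD('n) * \<bar>?r\<bar> * norm (Q$i) + nu * norm (ph - ph0)"
    using nu_pos by (simp add: abs_mult)
  also have "\<dots> \<le> real CARD('n) * (2 * k * R + Ymax) * k + nu * (R + R)"
    using r norm_Q norm_triangle_le_diff[OF add_mono[OF ph norm_ph0]] nu_pos k_nonneg R_nonneg Ymax_nonneg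
    by (intro add_mono mult_mono mult_left_mono) auto
  finally show ?thesis by (simp add: mult_ac)
qed

lemma norm_sample_grad_sq_le:
  assumes "norm th \<le> R" "norm ph \<le> R"
  shows "(norm (sample_grad_th P Q th0 lam i th ph))^2 + (norm (sample_grad_ph P Q Yt ph0 nu i th ph))^2
    \<le> grad_bound^2"
proof -
  let ?G1 = "real CARD('n) * k * k * R + 2 * lam * R"
  let ?G2 = "real CARD('n) * (2 * k * R + Ymax) * k + 2 * nu * R"
  have g1: "norm (sample_grad_th P Q th0 lam i th ph) \<le> ?G1"
    and g2: "norm (sample_grad_ph P Q Yt ph0 nu i th ph) \<le> ?G2"
    using norm_sample_grad_th_le[OF assms] norm_sample_grad_ph_le[OF assms] .
  then have "0 \<le> ?G1" "0 \<le> ?G2" using norm_ge_zero order_trans by blast+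
  moreover have "grad_bound^2 = ?G1^2 + ?G2^2 + 2 * ?G1 * ?G2"
    unfolding grad_bound_def sgda_grad_bound_def by (rule power2_sum)
  ultimately show ?thesis
    using power_mono[OF g1 norm_ge_zero, of 2] power_mono[OF g2 norm_ge_zero, of 2]
      mult_nonneg_nonneg[of ?G1 ?G2] by linarith
qed

lemma err_step_le:
  assumes z: "norm (fst z) \<le> R" "norm (snd z) \<le> R" and eta: "eta \<ge> 0"
  shows "err (step eta i z) \<le> err z
    - 2 * eta * (sample_grad_th P Q th0 lam i (fst z) (snd z) \<bullet> (fst z - fst zs))
    + 2 * eta * (sample_grad_ph P Q Yt ph0 nu i (fst z) (snd z) \<bullet> (snd z - snd zs))
    + eta^2 * grad_bound^2"
proof -
  let ?g = "sample_grad_th P Q th0 lam i (fst z) (snd z)"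
  let ?h = "sample_grad_ph P Q Yt ph0 nu i (fst z) (snd z)"
  have "err (step eta i z) \<le> (norm ((fst z - fst zs) - eta *\<^sub>R ?g))^2 + (norm ((snd z - snd zs) + eta *\<^sub>R ?h))^2"
    unfolding err_def sgda_step_def
    using norm_proj_ball_diff_le[OF norm_saddle_sol(1), of "fst z - eta *\<^sub>R ?g"]
      norm_proj_ball_diff_le[OF norm_saddle_sol(2), of "snd z + eta *\<^sub>R ?h"]
    by (auto intro!: add_mono power_mono simp: algebra_simps)
  also have "\<dots> = err z - 2 * eta * (?g \<bullet> (fst z - fst zs)) + 2 * eta * (?h \<bullet> (snd z - snd zs))
      + eta^2 * ((norm ?g)^2 + (norm ?h)^2)"
    unfolding err_def power2_norm_eq_inner
    by (simp add: inner_diff_left inner_diff_right inner_add_left inner_add_right power2_eq_square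
        algebra_simps inner_commute)
  also have "\<dots> \<le> err z - 2 * eta * (?g \<bullet> (fst z - fst zs)) + 2 * eta * (?h \<bullet> (snd z - snd zs))
      + eta^2 * grad_bound^2"
    using norm_sample_grad_sq_le[OF z] by (simp add: mult_left_mono)
  finally show ?thesis .
qed

lemma mean_err_step_le:
  assumes z: "norm (fst z) \<le> R" "norm (snd z) \<le> R" and eta: "eta \<ge> 0"
  shows "(\<Sum>i\<in>UNIV. err (step eta i z)) / real CARD('n) \<le> (1 - 2 * eta * mu) * err z + eta^2 * grad_bound^2"
proof -
  let ?F = "full_grad_th P Q th0 lam (fst z) (snd z)" and ?G = "full_grad_ph P Q Yt ph0 nu (fst z) (snd z)"
  let ?g = "\<lambda>i. sample_grad_th P Q th0 lam i (fst z) (snd z)"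
  let ?h = "\<lambda>i. sample_grad_ph P Q Yt ph0 nu i (fst z) (snd z)"
  have "(\<Sum>i\<in>UNIV. err (step eta i z)) \<le> (\<Sum>i\<in>UNIV. err z - 2 * eta * (?g i \<bullet> (fst z - fst zs))
      + 2 * eta * (?h i \<bullet> (snd z - snd zs)) + eta^2 * grad_bound^2)"
    by (rule sum_mono) (rule err_step_le[OF z eta])
  also have "\<dots> = real CARD('n) * (err z + eta^2 * grad_bound^2)
      - 2 * eta * ((\<Sum>i\<in>UNIV. ?g i) \<bullet> (fst z - fst zs)) + 2 * eta * ((\<Sum>i\<in>UNIV. ?h i) \<bullet> (snd z - snd zs))"
    by (simp add: sum.distrib sum_subtractf inner_sum_left sum_distrib_left algebra_simps)
  also have "\<dots> = real CARD('n) * (err z + eta^2 * grad_bound^2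
      - 2 * eta * (?F \<bullet> (fst z - fst zs) - ?G \<bullet> (snd z - snd zs)))"
    unfolding sum_sample_grad_th sum_sample_grad_ph by (simp add: algebra_simps)
  also have "\<dots> \<le> real CARD('n) * (err z + eta^2 * grad_bound^2 - 2 * eta * (mu * err z))"
    using full_grad_inner_saddle_sol_ge[OF lam_pos nu_pos refl, where th = "fst z" and ph = "snd z"] eta
    by (intro mult_left_mono diff_left_mono) (simp_all add: err_def)
  finally have "(\<Sum>i\<in>UNIV. err (step eta i z))
      \<le> ((1 - 2 * eta * mu) * err z + eta^2 * grad_bound^2) * real CARD('n)"
    by (simp add: algebra_simps)
  then show ?thesis by (simp add: pos_divide_le_eq)
qed

lemma sum_err_iter_Suc:
  "(\<Sum>p\<in>idx_prefixes (Suc t). err (iter (Suc t) p))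
     = (\<Sum>g\<in>idx_prefixes t. \<Sum>i\<in>UNIV. err (step (1 / (mu * real (Suc t))) i (iter t g)))"
proof -
  have "iter (Suc t) (g(t := i)) = step (1 / (mu * real (Suc t))) i (iter t g)" for g i
    unfolding sgda_Suc by (simp add: sgda_cong_prefix[of t "g(t := i)" g])
  then show ?thesis by (simp add: sum_PiE_lessThan_Suc sum.swap[where A = UNIV])
qed

lemma mean_err_Suc_le:
  "mean_err (Suc t) \<le> (1 - 2 / (real t + 1)) * mean_err t + err_const / (real t + 1)^2"
proof -
  let ?eta = "1 / (mu * real (Suc t))"
  let ?n = "real CARD('n)"
  have mu: "mu > 0" using lam_pos nu_pos by simp
  have "(\<Sum>p\<in>idx_prefixes (Suc t). err (iter (Suc t) p))
      = (\<Sum>g\<in>idx_prefixes t. \<Sum>i\<in>UNIV. err (step ?eta i (iter t g)))"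
    by (rule sum_err_iter_Suc)
  also have "\<dots> \<le> (\<Sum>g\<in>idx_prefixes t. ?n * ((1 - 2 * ?eta * mu) * err (iter t g) + ?eta^2 * grad_bound^2))"
  proof (rule sum_mono)
    fix g
    have "(\<Sum>i\<in>UNIV. err (step ?eta i (iter t g))) / ?n
        \<le> (1 - 2 * ?eta * mu) * err (iter t g) + ?eta^2 * grad_bound^2"
      using iter_in_ball mu by (intro mean_err_step_le) auto
    then show "(\<Sum>i\<in>UNIV. err (step ?eta i (iter t g)))
        \<le> ?n * ((1 - 2 * ?eta * mu) * err (iter t g) + ?eta^2 * grad_bound^2)"
      by (simp add: pos_divide_le_eq mult.commute)
  qed
  also have "\<dots> = ?n * ((1 - 2 / (real t + 1)) * (\<Sum>g\<in>idx_prefixes t. err (iter t g))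
      + ?n ^ t * (err_const / (real t + 1)^2))"
  proof -
    have "2 * ?eta * mu = 2 / (real t + 1)" "?eta^2 * grad_bound^2 = err_const / (real t + 1)^2"
      using lam_pos nu_pos by (simp_all add: err_const_def power_divide power_mult_distrib min_def)
    then show ?thesis by (simp add: sum.distrib sum_subtractf sum_distrib_left card_PiE algebra_simps)
  qed
  finally have "mean_err (Suc t) \<le> ?n * ((1 - 2 / (real t + 1)) * (\<Sum>g\<in>idx_prefixes t. err (iter t g))
      + ?n ^ t * (err_const / (real t + 1)^2)) / ?n ^ Suc t"
    unfolding mean_err_def by (rule divide_right_mono) simp
  also have "\<dots> = (1 - 2 / (real t + 1)) * mean_err t + err_const / (real t + 1)^2"
  proof -
    have "?n * (c * x + ?n ^ t * a) / ?n ^ Suc t = c * (x / ?n ^ t) + a" for c x a :: real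
      by (simp add: field_simps)
    then show ?thesis unfolding mean_err_def .
  qed
  finally show ?thesis .
qed

lemma mean_err_le: "t \<ge> 1 \<Longrightarrow> mean_err t \<le> err_const / real t"
proof (induction t rule: nat_induct_at_least)
  case base
  have "mean_err 0 \<ge> 0" unfolding mean_err_def by (simp add: sum_nonneg err_nonneg)
  then show ?case using mean_err_Suc_le[of 0] by simp
next
  case (Suc t)
  show ?case
    using err_const_nonneg mean_err_Suc_le[of t] one_over_t_recursion[of "real t" err_const "mean_err t"] Suc
    by (simp add: add.commute)
qed

lemma card_far_iterates_le:
  "real (card {p \<in> idx_prefixes L. \<epsilon> < norm (fst (iter L p) - fst zs)}) * \<epsilon>^2
     \<le> real CARD('n) ^ L * mean_err L"
  if "\<epsilon> > 0"
proof -
  let ?A = "{p \<in> idx_prefixes L. \<epsilon> < norm (fst (iter L p) - fst zs)}"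
  have "real (card ?A) * \<epsilon>^2 = (\<Sum>p\<in>?A. \<epsilon>^2)" by simp
  also have "\<dots> \<le> (\<Sum>p\<in>?A. err (iter L p))"
  proof (rule sum_mono)
    fix p assume "p \<in> ?A"
    then have "\<epsilon>^2 \<le> (norm (fst (iter L p) - fst zs))^2" using that by (intro power_mono) auto
    then show "\<epsilon>^2 \<le> err (iter L p)" unfolding err_def by (simp add: add_increasing2)
  qed
  also have "\<dots> \<le> (\<Sum>p\<in>idx_prefixes L. err (iter L p))"
    by (rule sum_mono2) (auto simp: finite_PiE err_nonneg)
  also have "\<dots> = real CARD('n) ^ L * mean_err L" by (simp add: mean_err_def)
  finally show ?thesis .
qed

lemma emeasure_far_iterate_le:
  assumes "\<epsilon> > 0" "L \<ge> 1"
  shows "emeasure index_seq {I. \<epsilon> < norm (fst (iter L I) - fst zs)} \<le> err_const / (real L * \<epsilon>^2)"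
proof -
  define X where "X = {p \<in> idx_prefixes L. \<epsilon> < norm (fst (iter L p) - fst zs)}"
  have "iter L (restrict I {..<L}) = iter L I" for I by (rule sgda_cong_prefix) simp
  then have "{I. \<epsilon> < norm (fst (iter L I) - fst zs)} = {I. restrict I {..<L} \<in> X}"
    by (auto simp: X_def)
  then have "emeasure index_seq {I. \<epsilon> < norm (fst (iter L I) - fst zs)} = real (card X) / real CARD('n) ^ L"
    by (simp only:) (rule emeasure_index_seq_prefix_set, auto simp: X_def)
  also have "real (card X) / real CARD('n) ^ L \<le> mean_err L / \<epsilon>^2"
    using card_far_iterates_le[OF assms(1), of L] assms(1) unfolding X_def
    by (simp add: field_simps)
  also have "\<dots> \<le> err_const / (real L * \<epsilon>^2)"
    using mean_err_le[OF assms(2)] assms(1) by (simp add: divide_right_mono field_simps)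
  finally show ?thesis by (simp add: ennreal_leI)
qed

text \<open>The summand \<open>4 R\<^sup>2\<close> covers the cases \<open>\<epsilon> \<ge> 2 R\<close>, where the event is empty, and \<open>\<delta> \<ge> 1\<close>.\<close>

lemma emeasure_far_iterate_le_delta:
  assumes e: "\<epsilon> > 0" and d: "\<delta> > 0" and L: "(err_const + 4 * R^2) / (\<delta> * \<epsilon>^2) < real L + 1"
  shows "emeasure index_seq {I. \<epsilon> < norm (fst (iter L I) - fst zs)} \<le> \<delta>"
proof -
  let ?far = "{I. \<epsilon> < norm (fst (iter L I) - fst zs)}"
  consider "2 * R \<le> \<epsilon>" | "1 \<le> \<delta>" | "\<epsilon> < 2 * R" "\<delta> < 1" by linarith
  then show ?thesis
  proof cases
    case 1
    have "\<not> \<epsilon> < norm (fst (iter L I) - fst zs)" for I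
      using iter_in_ball[where t = L and I = I] norm_saddle_sol(1)
        norm_triangle_ineq4[of "fst (iter L I)" "fst zs"] 1
      by linarith
    then show ?thesis by simp
  next
    case 2
    have "emeasure index_seq ?far \<le> 1"
      by (rule prob_space.emeasure_le_1[OF prob_space_index_seq])
    also have "\<dots> \<le> ennreal \<delta>" using 2 by simp
    finally show ?thesis .
  next
    case 3
    have de: "\<delta> * \<epsilon>^2 > 0" using e d by simp
    have "\<delta> * \<epsilon>^2 < \<epsilon>^2" using 3(2) e by simp
    also have "\<epsilon>^2 < (2 * R)^2" using 3(1) e by (intro power_strict_mono) auto
    finally have "1 < 4 * R^2 / (\<delta> * \<epsilon>^2)" using de by (simp add: power_mult_distrib)
    then have "err_const / (\<delta> * \<epsilon>^2) < real L"
      using L by (simp add: add_divide_distrib)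
    then have K: "err_const < \<delta> * (real L * \<epsilon>^2)"
      using de by (simp add: pos_divide_less_eq mult_ac)
    have L1: "L \<ge> 1" using K err_const_nonneg by (cases L) auto
    from K have "err_const / (real L * \<epsilon>^2) \<le> \<delta>" using e L1 by (simp add: pos_divide_le_eq mult.commute)
    with emeasure_far_iterate_le[OF e L1] show ?thesis using order_trans ennreal_leI by blast
  qed
qed

end

section \<open>The probability of the bad event\<close>

lemma prob_space_gauss_vec:
  fixes mu :: "real^'d::finite"
  assumes "s2 > 0"
  shows "prob_space (gauss_vec mu s2)"
proof
  let ?f = "\<lambda>b t. ennreal (normal_density (mu \<bullet> b) (sqrt s2) t)"
  have Basis: "(Basis :: (real^'d) set) = range (\<lambda>i. axis i 1)" by (auto simp: Basis_vec_def)
  have "(\<Prod>i\<in>UNIV. normal_density (mu $ i) (sqrt s2) (v $ i))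
      = (\<Prod>b\<in>Basis. normal_density (mu \<bullet> b) (sqrt s2) (v \<bullet> b))" for v :: "real^'d"
    unfolding Basis by (subst prod.reindex) (auto intro!: injI simp: axis_eq_axis inner_axis)
  then have "emeasure (gauss_vec mu s2) (space (gauss_vec mu s2))
      = (\<integral>\<^sup>+v. (\<Prod>b\<in>Basis. ?f b (v \<bullet> b)) \<partial>lborel)"
    unfolding gauss_vec_def by (simp add: emeasure_density prod_ennreal)
  also have "\<dots> = (\<Prod>b\<in>(Basis :: (real^'d) set). \<integral>\<^sup>+t. ?f b t \<partial>lborel)"
    by (rule nn_integral_lborel_prod) auto
  also have "\<dots> = 1"
    using prob_space.emeasure_space_1[OF prob_space_normal_density[of "sqrt s2"]] assms
    by (simp add: emeasure_density)
  finally show "emeasure (gauss_vec mu s2) (space (gauss_vec mu s2)) = 1" .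
qed

lemma sets_gauss_vec [measurable_cong]: "sets (gauss_vec mu s2) = sets borel"
  by (simp add: gauss_vec_def)

lemma prob_space_sgda_space:
  assumes "lam > 0" "nu > 0"
  shows "prob_space (sgda_space lam nu (Y :: real^'n::finite)
    :: (((real^'m::finite) \<times> (real^'m)) \<times> ((real^'n) \<times> (nat \<Rightarrow> 'n))) measure)"
  unfolding sgda_space_def using assms
  by (intro prob_space_pair prob_space_gauss_vec prob_space_index_seq) simp_all

lemma measurable_sgda_space_fst_fst [measurable]:
  "(\<lambda>\<omega>. fst (fst \<omega>)) \<in> borel_measurable (sgda_space lam nu Y)"
  unfolding sgda_space_def by measurable

lemma measurable_sgda_space_snd_fst [measurable]:
  "(\<lambda>\<omega>. snd (fst \<omega>)) \<in> borel_measurable (sgda_space lam nu Y)"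
  unfolding sgda_space_def by measurable

lemma measurable_sgda_space_fst_snd [measurable]:
  "(\<lambda>\<omega>. fst (snd \<omega>)) \<in> borel_measurable (sgda_space lam nu Y)"
  unfolding sgda_space_def by measurable

lemma measurable_sgda_space_index:
  "(\<lambda>\<omega>. snd (snd \<omega>) l) \<in> measurable (sgda_space lam nu (Y :: real^'n::finite)
     :: (((real^'m::finite) \<times> (real^'m)) \<times> ((real^'n) \<times> (nat \<Rightarrow> 'n))) measure) (count_space UNIV)"
proof -
  have "(\<lambda>\<omega>. snd (snd \<omega>) l) \<in> measurable (sgda_space lam nu Y) (measure_pmf (pmf_of_set (UNIV :: 'n set)))"
    unfolding sgda_space_def index_seq_def by measurable
  then show ?thesis by (simp cong: measurable_cong_sets)
qed

lemma continuous_on_saddle_sol: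
  fixes P Q :: "real^'m::finite^'n::finite"
  assumes "lam > 0" "nu > 0"
  shows "continuous_on UNIV (\<lambda>x. saddle_sol P Q (snd (snd x)) (fst x) (fst (snd x)) lam nu)"
proof -
  have "linear (inv (saddle_op P Q lam nu))"
    using linear_saddle_op inj_saddle_op[OF assms] by (rule inj_linear_imp_inv_linear)
  then have "continuous_on UNIV (inv (saddle_op P Q lam nu))"
    by (simp add: linear_continuous_on linear_conv_bounded_linear)
  then show ?thesis unfolding saddle_sol_def saddle_rhs_def
    by (rule continuous_on_compose2[of UNIV]) (auto intro!: continuous_intros)
qed

lemma measurable_saddle_sol:
  fixes P Q :: "real^'m::finite^'n::finite"
  assumes "lam > 0" "nu > 0"
  shows "(\<lambda>\<omega>. saddle_sol P Q (fst (snd \<omega>)) (fst (fst \<omega>)) (snd (fst \<omega>)) lam nu)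
    \<in> borel_measurable (sgda_space lam nu Y)"
  using borel_measurable_continuous_on[OF continuous_on_saddle_sol[OF assms], of
      "\<lambda>\<omega>. (fst (fst \<omega>), snd (fst \<omega>), fst (snd \<omega>))" "sgda_space lam nu Y"]
  by simp

lemma continuous_on_sgda_step:
  fixes P Q :: "real^'m::finite^'n::finite"
  assumes "R \<ge> 0"
  shows "continuous_on UNIV (\<lambda>x. sgda_step P Q (snd (snd (snd x))) (fst (snd x)) (fst (snd (snd x)))
    lam nu R R eta i (fst x))"
  unfolding sgda_step_def sample_grad_th_def sample_grad_ph_def
  by (intro continuous_on_Pair continuous_on_compose2[OF continuous_on_proj_ball[OF assms], of UNIV]
      continuous_intros) auto

lemma measurable_sgda:
  fixes P Q :: "real^'m::finite^'n::finite"
  assumes "R \<ge> 0"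
  shows "(\<lambda>\<omega>. sgda P Q (fst (snd \<omega>)) (fst (fst \<omega>)) (snd (fst \<omega>)) lam nu R R (snd (snd \<omega>)) L)
    \<in> borel_measurable (sgda_space lam nu Y)"
proof (induction L)
  case 0
  have "(\<lambda>\<omega>. (fst (fst \<omega>), snd (fst \<omega>))) \<in> borel_measurable (sgda_space lam nu Y)"
    by (intro borel_measurable_Pair) measurable
  then show ?case by simp
next
  case (Suc L)
  let ?z = "\<lambda>\<omega>. sgda P Q (fst (snd \<omega>)) (fst (fst \<omega>)) (snd (fst \<omega>)) lam nu R R (snd (snd \<omega>)) L"
  let ?eta = "1 / (min lam nu * real (Suc L))"
  let ?step = "\<lambda>i \<omega>. sgda_step P Q (fst (snd \<omega>)) (fst (fst \<omega>)) (snd (fst \<omega>)) lam nu R R ?eta i (?z \<omega>)"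
  have "?step i \<in> borel_measurable (sgda_space lam nu Y)" for i
    using borel_measurable_continuous_on[OF continuous_on_sgda_step[OF assms], of
        "\<lambda>\<omega>. (?z \<omega>, fst (fst \<omega>), snd (fst \<omega>), fst (snd \<omega>))" "sgda_space lam nu Y"] Suc.IH
    by simp
  then have "(\<lambda>\<omega>. ?step (snd (snd \<omega>) L) \<omega>) \<in> borel_measurable (sgda_space lam nu Y)"
    by (rule measurable_compose_countable[OF _ measurable_sgda_space_index])
  then show ?case by (simp only: sgda_Suc)
qed

lemma emeasure_pair_pair_le:
  assumes "prob_space M1" "prob_space M2" "prob_space M3" and A: "A \<in> sets (M1 \<Otimes>\<^sub>M (M2 \<Otimes>\<^sub>M M3))"
    and section_le: "\<And>x y. emeasure M3 (Pair y -` Pair x -` A) \<le> c"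
  shows "emeasure (M1 \<Otimes>\<^sub>M (M2 \<Otimes>\<^sub>M M3)) A \<le> c"
proof -
  interpret M23: prob_space "M2 \<Otimes>\<^sub>M M3" using assms(2,3) by (rule prob_space_pair)
  interpret M3: prob_space M3 by fact
  have "emeasure (M1 \<Otimes>\<^sub>M (M2 \<Otimes>\<^sub>M M3)) A = (\<integral>\<^sup>+x. emeasure (M2 \<Otimes>\<^sub>M M3) (Pair x -` A) \<partial>M1)"
    by (rule M23.emeasure_pair_measure_alt[OF A])
  also have "\<dots> \<le> (\<integral>\<^sup>+x. c \<partial>M1)"
  proof (rule nn_integral_mono)
    fix x
    have "emeasure (M2 \<Otimes>\<^sub>M M3) (Pair x -` A) = (\<integral>\<^sup>+y. emeasure M3 (Pair y -` Pair x -` A) \<partial>M2)"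
      by (rule M3.emeasure_pair_measure_alt[OF sets_Pair1[OF A]])
    also have "\<dots> \<le> (\<integral>\<^sup>+y. c \<partial>M2)" by (intro nn_integral_mono section_le)
    finally show "emeasure (M2 \<Otimes>\<^sub>M M3) (Pair x -` A) \<le> c"
      using assms(2) by (simp add: prob_space.emeasure_space_1)
  qed
  finally show ?thesis using assms(1) by (simp add: prob_space.emeasure_space_1)
qed

lemma space_sgda_space: "space (sgda_space lam nu Y) = UNIV"
  by (simp add: sgda_space_def space_pair_measure gauss_vec_def index_seq_def space_PiM)

lemma norm_feat_mat_row_sq:
  fixes phi :: "'a \<Rightarrow> real^'m::finite" and xs :: "'n::finite \<Rightarrow> 'a"
  shows "(norm (feat_mat phi xs $ i))^2 = rf_kernel phi (xs i) (xs i)"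
proof -
  have "(norm (feat_mat phi xs $ i))^2 = (\<Sum>j\<in>UNIV. (phi (xs i) $ j / sqrt (real CARD('m)))^2)"
    unfolding power2_norm_eq_inner by (simp add: feat_mat_def inner_vec_def power2_eq_square)
  then show ?thesis
    by (simp add: power_divide sum_divide_distrib rf_kernel_def inner_vec_def power2_eq_square)
qed

lemma rf_kernel_nonneg: "rf_kernel phi x x \<ge> 0"
  by (simp add: rf_kernel_def)

lemma norm_feat_mat_row_le:
  assumes "\<And>x. rf_kernel phi x x \<le> B"
  shows "norm (feat_mat phi xs $ i) \<le> sqrt B"
  using norm_feat_mat_row_sq[of phi xs i] assms[of "xs i"] by (metis norm_ge_zero real_le_rsqrt)

lemma rf_kernel_le_of_SUP_add_le:
  assumes "(SUP z. ereal (rf_kernel phz z z)) + (SUP x. ereal (rf_kernel phx x x)) \<le> ereal B"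
  shows "rf_kernel phz z z \<le> B" "rf_kernel phx x x \<le> B"
proof -
  have z: "ereal (rf_kernel phz z z) \<le> (SUP z. ereal (rf_kernel phz z z))"
    and x: "ereal (rf_kernel phx x x) \<le> (SUP x. ereal (rf_kernel phx x x))"
    by (auto intro: SUP_upper)
  have z0: "0 \<le> (SUP z. ereal (rf_kernel phz z z))"
    using z rf_kernel_nonneg[of phz z] by (meson ereal_less_eq(5) order_trans)
  have x0: "0 \<le> (SUP x. ereal (rf_kernel phx x x))"
    using x rf_kernel_nonneg[of phx x] by (meson ereal_less_eq(5) order_trans)
  have "ereal (rf_kernel phz z z) + 0 \<le> ereal B" using add_mono[OF z x0] assms by (rule order_trans)
  moreover have "0 + ereal (rf_kernel phx x x) \<le> ereal B" using add_mono[OF z0 x] assms by (rule order_trans)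
  ultimately show "rf_kernel phz z z \<le> B" "rf_kernel phx x x \<le> B" by simp_all
qed

text \<open>A radius containing the initial point and, by \<open>norm_saddle_sol_le\<close>, the saddle point.\<close>

definition sgda_radius :: "nat \<Rightarrow> real \<Rightarrow> real \<Rightarrow> real \<Rightarrow> real \<Rightarrow> real \<Rightarrow> real" where
  "sgda_radius n lam nu B1 B2 k = max B1 (2 * (lam * B1 + real n * B2 * k + nu * B1) / min lam nu)"

definition sgda_const :: "nat \<Rightarrow> real \<Rightarrow> real \<Rightarrow> real \<Rightarrow> real \<Rightarrow> real \<Rightarrow> real" where
  "sgda_const n lam nu B1 B2 k =
     (sgda_grad_bound n lam nu (sgda_radius n lam nu B1 B2 k) B2 k / min lam nu)^2
     + 4 * (sgda_radius n lam nu B1 B2 k)^2"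

text \<open>The condition \<open>good\<close> stands for the kernel bound in \<open>E_n\<close>, which does not depend on the sample.\<close>

definition sgda_far_event :: "real \<Rightarrow> real \<Rightarrow> real^'n::finite \<Rightarrow> real^'m::finite^'n \<Rightarrow> real^'m^'n
    \<Rightarrow> real \<Rightarrow> nat \<Rightarrow> real \<Rightarrow> real \<Rightarrow> real \<Rightarrow> bool
    \<Rightarrow> (((real^'m) \<times> (real^'m)) \<times> ((real^'n) \<times> (nat \<Rightarrow> 'n))) set" where
  "sgda_far_event lam nu Y P Q R L \<epsilon> B1 B2 good = {\<omega> \<in> space (sgda_space lam nu Y).
     \<epsilon> < norm (fst (sgda P Q (fst (snd \<omega>)) (fst (fst \<omega>)) (snd (fst \<omega>)) lam nu R R (snd (snd \<omega>)) L)
                - fst (saddle_sol P Q (fst (snd \<omega>)) (fst (fst \<omega>)) (snd (fst \<omega>)) lam nu))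
     \<and> norm (fst (fst \<omega>)) + norm (snd (fst \<omega>)) \<le> B1 \<and> norm (fst (snd \<omega>)) \<le> B2 \<and> good}"

lemma sets_sgda_far_event:
  assumes "lam > 0" "nu > 0" "R \<ge> 0"
  shows "sgda_far_event lam nu Y P Q R L \<epsilon> B1 B2 good \<in> sets (sgda_space lam nu Y)"
proof -
  have c: "continuous_on UNIV (\<lambda>p :: ((real^'m) \<times> (real^'m)) \<times> ((real^'m) \<times> (real^'m)).
      norm (fst (fst p) - fst (snd p)))"
    by (intro continuous_intros)
  have "(\<lambda>\<omega>. (sgda P Q (fst (snd \<omega>)) (fst (fst \<omega>)) (snd (fst \<omega>)) lam nu R R (snd (snd \<omega>)) L,
      saddle_sol P Q (fst (snd \<omega>)) (fst (fst \<omega>)) (snd (fst \<omega>)) lam nu))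
      \<in> borel_measurable (sgda_space lam nu Y)"
    using assms by (intro borel_measurable_Pair measurable_sgda measurable_saddle_sol)
  from borel_measurable_continuous_on[OF c this]
  have "(\<lambda>\<omega>. norm (fst (sgda P Q (fst (snd \<omega>)) (fst (fst \<omega>)) (snd (fst \<omega>)) lam nu R R (snd (snd \<omega>)) L)
      - fst (saddle_sol P Q (fst (snd \<omega>)) (fst (fst \<omega>)) (snd (fst \<omega>)) lam nu)))
      \<in> borel_measurable (sgda_space lam nu Y)"
    by simp
  then show ?thesis unfolding sgda_far_event_def by measurable
qed

lemma emeasure_sgda_far_event_section_le:
  fixes P Q :: "real^'m::finite^'n::finite" and Y :: "real^'n"
  assumes lam: "lam > 0" and nu: "nu > 0" and e: "\<epsilon> > 0" and d: "\<delta> > 0"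
    and rows: "good \<Longrightarrow> (\<forall>i. norm (P$i) \<le> k \<and> norm (Q$i) \<le> k)"
    and L: "sgda_const CARD('n) lam nu B1 B2 k / (\<delta> * \<epsilon>^2) < real L + 1"
  defines "R \<equiv> sgda_radius CARD('n) lam nu B1 B2 k"
  shows "emeasure index_seq (Pair y -` Pair x -` sgda_far_event lam nu Y P Q R L \<epsilon> B1 B2 good) \<le> \<delta>"
proof (cases "good \<and> norm (fst x) + norm (snd x) \<le> B1 \<and> norm y \<le> B2")
  case True
  have R: "B1 \<le> R" "2 * (lam * B1 + real CARD('n) * B2 * k + nu * B1) / min lam nu \<le> R"
    unfolding R_def sgda_radius_def by simp_all
  have th0: "norm (fst x) \<le> B1" and ph0: "norm (snd x) \<le> B1"
    using True norm_ge_zero[of "fst x"] norm_ge_zero[of "snd x"] by linarith+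
  have Yt: "\<And>i. \<bar>y$i\<bar> \<le> B2" using True component_le_norm_cart order_trans by blast
  have P: "\<And>i. norm (P$i) \<le> k" and Q: "\<And>i. norm (Q$i) \<le> k" using True rows by blast+
  interpret bounded_sgda P Q y "fst x" "snd x" lam nu R B2 k
  proof
    show "norm (fst x) \<le> R" "norm (snd x) \<le> R" using th0 ph0 R(1) by linarith+
    let ?z = "saddle_sol P Q y (fst x) (snd x) lam nu"
    have "norm (fst ?z) + norm (snd ?z) \<le> R"
      using norm_saddle_sol_le[where P = P, OF lam nu th0 ph0 Yt Q refl] R(2) by linarith
    then show "norm (fst ?z) \<le> R" "norm (snd ?z) \<le> R"
      using norm_ge_zero[of "fst ?z"] norm_ge_zero[of "snd ?z"] by linarith+
  qed (use lam nu Yt P Q in auto)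
  have "sgda_const CARD('n) lam nu B1 B2 k = err_const + 4 * R^2"
    by (simp add: sgda_const_def err_const_def grad_bound_def R_def[symmetric])
  then have "emeasure index_seq {I. \<epsilon> < norm (fst (iter L I) - fst zs)} \<le> \<delta>"
    using L by (intro emeasure_far_iterate_le_delta[OF e d]) simp
  moreover have "Pair y -` Pair x -` sgda_far_event lam nu Y P Q R L \<epsilon> B1 B2 good
      = {I. \<epsilon> < norm (fst (iter L I) - fst zs)}"
    using True by (auto simp: sgda_far_event_def space_sgda_space)
  ultimately show ?thesis by simp
next
  case False
  then have "Pair y -` Pair x -` sgda_far_event lam nu Y P Q R L \<epsilon> B1 B2 good = {}"
    by (auto simp: sgda_far_event_def)
  then show ?thesis by simp
qed

lemma measure_sgda_far_event_le:
  fixes P Q :: "real^'m::finite^'n::finite" and Y :: "real^'n"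
  assumes lam: "lam > 0" and nu: "nu > 0" and B1: "B1 > 0" and e: "\<epsilon> > 0" and d: "\<delta> > 0"
    and rows: "good \<Longrightarrow> (\<forall>i. norm (P$i) \<le> k \<and> norm (Q$i) \<le> k)"
    and L: "sgda_const CARD('n) lam nu B1 B2 k / (\<delta> * \<epsilon>^2) < real L + 1"
  defines "R \<equiv> sgda_radius CARD('n) lam nu B1 B2 k"
  shows "measure (sgda_space lam nu Y) (sgda_far_event lam nu Y P Q R L \<epsilon> B1 B2 good) \<le> \<delta>"
proof -
  have "R > 0" using B1 by (simp add: R_def sgda_radius_def less_max_iff_disj)
  then have "emeasure (sgda_space lam nu Y) (sgda_far_event lam nu Y P Q R L \<epsilon> B1 B2 good) \<le> \<delta>"
    using lam nu sets_sgda_far_event[OF lam nu, of R Y P Q L \<epsilon> B1 B2 good]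
      emeasure_sgda_far_event_section_le[OF lam nu e d rows L] unfolding sgda_space_def R_def
    by (intro emeasure_pair_pair_le prob_space_pair prob_space_gauss_vec prob_space_index_seq) auto
  then show ?thesis using d
    by (simp add: finite_measure.emeasure_eq_measure[OF prob_space.finite_measure[OF prob_space_sgda_space[OF lam nu]]])
qed

theorem mainTheorem17:
  fixes xs :: "'n::finite \<Rightarrow> 'x" and zs :: "'n \<Rightarrow> 'z" and Y :: "real^'n"
    and phx :: "'x \<Rightarrow> real^'m::finite" and phz :: "'z \<Rightarrow> real^'m"
    and lam nu :: real
  assumes "lam > 0" and "nu > 0"
  shows "\<forall>B1 B2 B3. B1 > 0 \<and> B2 > 0 \<and> B3 > 0 \<longrightarrow>
    (\<exists>C. \<forall>\<epsilon> \<delta>. \<epsilon> > 0 \<and> \<delta> > 0 \<longrightarrow>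
      (\<exists>Bf Bg. Bf > 0 \<and> Bg > 0 \<and>
        (\<exists>L0::nat. real L0 \<le> C / (\<delta> * \<epsilon>^2) \<and>
          (\<forall>L\<ge>L0.
            (\<exists>A \<in> sets (sgda_space lam nu Y).
              {\<omega> \<in> space (sgda_space lam nu Y).
                 (let th0 = fst (fst \<omega>); ph0 = snd (fst \<omega>); Yt = fst (snd \<omega>); I = snd (snd \<omega>);
                      Pf = feat_mat phx xs; Pg = feat_mat phz zs;
                      ths = fst (THE p. saddle_point (L_rf Pf Pg Yt th0 ph0 lam nu) (fst p) (snd p))
                  in norm (fst (sgda Pf Pg Yt th0 ph0 lam nu Bf Bg I L) - ths) > \<epsilon>
                     \<and> norm th0 + norm ph0 \<le> B1 \<and> norm Yt \<le> B2
                     \<and> (SUP z. ereal (rf_kernel phz z z)) + (SUP x. ereal (rf_kernel phx x x)) \<le> ereal B3)}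
              \<subseteq> A \<and> measure (sgda_space lam nu Y) A \<le> \<delta>)))))"
proof (intro allI impI, goal_cases)
  case (1 B1 B2 B3)
  let ?k = "sqrt B3"
  let ?C = "sgda_const CARD('n) lam nu B1 B2 ?k" and ?R = "sgda_radius CARD('n) lam nu B1 B2 ?k"
  let ?good = "(SUP z. ereal (rf_kernel phz z z)) + (SUP x. ereal (rf_kernel phx x x)) \<le> ereal B3"
  have rows: "?good \<Longrightarrow> \<forall>i. norm (feat_mat phx xs $ i) \<le> ?k \<and> norm (feat_mat phz zs $ i) \<le> ?k"
    by (blast intro: norm_feat_mat_row_le dest: rf_kernel_le_of_SUP_add_le)
  have R: "?R > 0" using 1 by (simp add: sgda_radius_def less_max_iff_disj)
  have C: "?C \<ge> 0" by (simp add: sgda_const_def)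
  show ?case
  proof (rule exI[of _ ?C], intro allI impI, goal_cases)
    case (1 \<epsilon> \<delta>)
    let ?L0 = "nat \<lfloor>?C / (\<delta> * \<epsilon>^2)\<rfloor>"
    let ?far = "\<lambda>L. sgda_far_event lam nu Y (feat_mat phx xs) (feat_mat phz zs) ?R L \<epsilon> B1 B2 ?good"
    have far_le: "measure (sgda_space lam nu Y) (?far L) \<le> \<delta>" if "?L0 \<le> L" for L
    proof (rule measure_sgda_far_event_le)
      show "?C / (\<delta> * \<epsilon>^2) < real L + 1" using that 1 C by linarith
    qed (use 1 assms rows \<open>B1 > 0 \<and> B2 > 0 \<and> B3 > 0\<close> in auto)
    have far_sets: "?far L \<in> sets (sgda_space lam nu Y)" for L
      using assms R by (intro sets_sgda_far_event) auto
    show ?case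
    proof (intro exI[of _ ?R] exI[of _ ?L0] conjI allI impI R, goal_cases)
      case 1
      show ?case using \<open>\<epsilon> > 0 \<and> \<delta> > 0\<close> C by simp
    next
      case (2 L)
      show ?case
        unfolding Let_def The_saddle_point_L_rf[OF assms] sgda_far_event_def[symmetric]
        using far_sets far_le[OF 2] by blast
    qed
  qed
qed

end
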